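(* Let $A\subset\mathbb{R}$, let $f:A\to\mathbb{R}$ be a function and let $a,L\in\mathbb{R}$. Then $T_5\lim_{x\to a}f(x)=L$ if and only if there exist functions $g,h:A\to\mathbb{R}$ and a real $\delta_0>0$ such that $f(x)=g(x)+h(x)$ for all $x\in A$, $\lim_{x\to a}g(x)=L$, and the set $\left\{x\in\left((a-\delta_0,a+\delta_0)\setminus\{a\}\right)\cap A:\ h(x)\neq0\right\}$ is countable.
   Context: $T_5\lim_{x\to a}f(x)=L$ means: for every real $\varepsilon>0$ there exists a real $\delta_\varepsilon>0$ such that the set $\left\{x\in\left((a-\delta_{\varepsilon},a+\delta_{\varepsilon})\setminus\{a\}\right)\cap A:\ |f(x)-L|\geq\varepsilon\right\}$ is countable (finite or countably infinite). The statement $\lim_{x\to a}g(x)=L$ denotes the classical limit: for every $\varepsilon>0$ there is $\delta>0$ such that $|g(x)-L|<\varepsilon$ for all $x\in A$ with $0<|x-a|<\delta$. *)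

theory Defs
  imports "HOL-Analysis.Analysis"
begin

definition T5_lim :: "real set \<Rightarrow> (real \<Rightarrow> real) \<Rightarrow> real \<Rightarrow> real \<Rightarrow> bool" where
  "T5_lim A f a L \<longleftrightarrow>
     (\<forall>\<epsilon>>0. \<exists>\<delta>>0. countable {x \<in> ({a - \<delta> <..< a + \<delta>} - {a}) \<inter> A. \<bar>f x - L\<bar> \<ge> \<epsilon>})"

end

theory Submission
  imports Defs
begin

text \<open>For \<open>\<epsilon> = 1 / (n + 1)\<close> the exceptional sets of the \<open>T\<^sub>5\<close>-limit are countable, hence so is
  their union \<open>E\<close>; off \<open>E\<close> the function has the classical limit, and conversely a classical limit
  off a countable set leaves only countably many exceptional points for every \<open>\<epsilon>\<close>. Redefining
  \<open>f\<close> to be \<open>L\<close> on \<open>E\<close> gives \<open>g\<close>, and \<open>h = f - g\<close> vanishes off \<open>E\<close>.\<close>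

lemma T5_lim_imp_tendsto_off_countable:
  assumes "T5_lim A f a L"
  obtains E where "countable E" "(f \<longlongrightarrow> L) (at a within A - E)"
proof -
  have "\<forall>n::nat. \<exists>\<delta>>0.
      countable {x \<in> ({a - \<delta> <..< a + \<delta>} - {a}) \<inter> A. \<bar>f x - L\<bar> \<ge> 1 / real (Suc n)}"
    using assms unfolding T5_lim_def by simp
  then obtain d where d_pos: "\<And>n. d n > 0" and countable_exceptions:
      "\<And>n. countable {x \<in> ({a - d n <..< a + d n} - {a}) \<inter> A. \<bar>f x - L\<bar> \<ge> 1 / real (Suc n)}"
    by metis
  define E where
    "E = (\<Union>n. {x \<in> ({a - d n <..< a + d n} - {a}) \<inter> A. \<bar>f x - L\<bar> \<ge> 1 / real (Suc n)})"
  have "countable E"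
    unfolding E_def using countable_exceptions by blast
  moreover have "(f \<longlongrightarrow> L) (at a within A - E)"
    unfolding Lim_within dist_real_def
  proof (intro allI impI)
    fix \<epsilon> :: real
    assume "\<epsilon> > 0"
    then obtain n where n: "1 / real (Suc n) < \<epsilon>"
      by (rule nat_approx_posE)
    have "\<bar>f x - L\<bar> < \<epsilon>" if "x \<in> A - E" "0 < \<bar>x - a\<bar>" "\<bar>x - a\<bar> < d n" for x
    proof -
      have "x \<in> ({a - d n <..< a + d n} - {a}) \<inter> A"
        using that by (auto simp: abs_less_iff)
      with \<open>x \<in> A - E\<close> have "\<bar>f x - L\<bar> < 1 / real (Suc n)"
        unfolding E_def by force
      with n show ?thesis by linarith
    qed
    with d_pos show "\<exists>\<delta>>0. \<forall>x\<in>A - E. 0 < \<bar>x - a\<bar> \<and> \<bar>x - a\<bar> < \<delta> \<longrightarrow> \<bar>f x - L\<bar> < \<epsilon>"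
      by blast
  qed
  ultimately show thesis
    by (rule that)
qed

lemma tendsto_off_countable_imp_T5_lim:
  assumes "countable E" and "(f \<longlongrightarrow> L) (at a within A - E)"
  shows "T5_lim A f a L"
  unfolding T5_lim_def
proof (intro allI impI)
  fix \<epsilon> :: real
  assume "\<epsilon> > 0"
  with assms(2) obtain \<delta> where "\<delta> > 0"
    and close: "\<And>x. x \<in> A - E \<Longrightarrow> 0 < \<bar>x - a\<bar> \<Longrightarrow> \<bar>x - a\<bar> < \<delta> \<Longrightarrow> \<bar>f x - L\<bar> < \<epsilon>"
    unfolding Lim_within dist_real_def by blast
  have "{x \<in> ({a - \<delta> <..< a + \<delta>} - {a}) \<inter> A. \<bar>f x - L\<bar> \<ge> \<epsilon>} \<subseteq> E"
    using close by force
  with \<open>\<delta> > 0\<close> \<open>countable E\<close> show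
    "\<exists>\<delta>>0. countable {x \<in> ({a - \<delta> <..< a + \<delta>} - {a}) \<inter> A. \<bar>f x - L\<bar> \<ge> \<epsilon>}"
    using countable_subset by blast
qed

lemma T5_lim_iff_tendsto_off_countable:
  "T5_lim A f a L \<longleftrightarrow> (\<exists>E. countable E \<and> (f \<longlongrightarrow> L) (at a within A - E))"
  by (metis T5_lim_imp_tendsto_off_countable tendsto_off_countable_imp_T5_lim)

lemma tendsto_off_countable_iff_decomposition:
  fixes f :: "'a::metric_space \<Rightarrow> 'b::real_normed_vector"
  shows "(\<exists>E. countable E \<and> (f \<longlongrightarrow> L) (at a within A - E)) \<longleftrightarrow>
    (\<exists>g h. \<exists>\<delta>\<^sub>0 > 0. (\<forall>x\<in>A. f x = g x + h x) \<and> (g \<longlongrightarrow> L) (at a within A) \<and>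
       countable {x \<in> (ball a \<delta>\<^sub>0 - {a}) \<inter> A. h x \<noteq> 0})"
proof
  assume "\<exists>E. countable E \<and> (f \<longlongrightarrow> L) (at a within A - E)"
  then obtain E where "countable E" and f_lim: "(f \<longlongrightarrow> L) (at a within A - E)"
    by blast
  define g where "g x = (if x \<in> E then L else f x)" for x
  have "(g \<longlongrightarrow> L) (at a within A - E)"
    using f_lim by (rule Lim_cong_within[THEN iffD1, rotated -1]) (simp_all add: g_def)
  moreover have "(g \<longlongrightarrow> L) (at a within A \<inter> E)"
    by (rule Lim_cong_within[THEN iffD1, rotated -1, OF tendsto_const]) (simp_all add: g_def)
  ultimately have "(g \<longlongrightarrow> L) (at a within A)"
    using Lim_Un[of g L a "A - E" "A \<inter> E"] by (simp add: Un_Diff_Int)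
  moreover have "{x \<in> (ball a 1 - {a}) \<inter> A. f x - g x \<noteq> 0} \<subseteq> E"
    by (auto simp: g_def)
  ultimately show "\<exists>g h. \<exists>\<delta>\<^sub>0 > 0. (\<forall>x\<in>A. f x = g x + h x) \<and> (g \<longlongrightarrow> L) (at a within A) \<and>
       countable {x \<in> (ball a \<delta>\<^sub>0 - {a}) \<inter> A. h x \<noteq> 0}"
    using \<open>countable E\<close> countable_subset
    by (intro exI[of _ g] exI[of _ "\<lambda>x. f x - g x"] exI[of _ 1]) auto
next
  assume "\<exists>g h. \<exists>\<delta>\<^sub>0 > 0. (\<forall>x\<in>A. f x = g x + h x) \<and> (g \<longlongrightarrow> L) (at a within A) \<and>
       countable {x \<in> (ball a \<delta>\<^sub>0 - {a}) \<inter> A. h x \<noteq> 0}"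
  then obtain g h \<delta>\<^sub>0 where "\<delta>\<^sub>0 > 0" and sum: "\<forall>x\<in>A. f x = g x + h x"
    and g_lim: "(g \<longlongrightarrow> L) (at a within A)"
    and "countable {x \<in> (ball a \<delta>\<^sub>0 - {a}) \<inter> A. h x \<noteq> 0}" (is "countable ?E")
    by blast
  have "(g \<longlongrightarrow> L) (at a within A - ?E)"
    using g_lim by (rule tendsto_within_subset) blast
  then have "(f \<longlongrightarrow> L) (at a within A - ?E)"
    by (rule Lim_transform_within[OF _ \<open>\<delta>\<^sub>0 > 0\<close>]) (auto simp: sum dist_commute)
  with \<open>countable ?E\<close> show "\<exists>E. countable E \<and> (f \<longlongrightarrow> L) (at a within A - E)"
    by blast
qed

theorem theorem3:
  fixes A :: "real set" and f :: "real \<Rightarrow> real" and a L :: real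
  shows "T5_lim A f a L \<longleftrightarrow>
    (\<exists>g h :: real \<Rightarrow> real. \<exists>\<delta>\<^sub>0 > 0.
       (\<forall>x\<in>A. f x = g x + h x) \<and>
       (\<forall>\<epsilon>>0. \<exists>\<delta>>0. \<forall>x\<in>A. 0 < \<bar>x - a\<bar> \<and> \<bar>x - a\<bar> < \<delta> \<longrightarrow> \<bar>g x - L\<bar> < \<epsilon>) \<and>
       countable {x \<in> ({a - \<delta>\<^sub>0 <..< a + \<delta>\<^sub>0} - {a}) \<inter> A. h x \<noteq> 0})"
  unfolding T5_lim_iff_tendsto_off_countable tendsto_off_countable_iff_decomposition
  by (simp only: Lim_within dist_real_def ball_eq_greaterThanLessThan)

end
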